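(* Let $T$ be a tree of order at least $2$ with support vertices $v_1,\dots,v_s$, where $v_i$ is adjacent to exactly $\ell_i$ leaves. Then there exists an ISTDF $f$ of $T$ of weight $\gamma^{0}_{st}(T)$ such that, for every $i\in\{1,\dots,s\}$, $f$ assigns the value $1$ to at least $\lfloor \ell_i/2\rfloor$ of the leaves adjacent to $v_i$.
   Context: For a vertex $v$ of a graph $G=(V,E)$, $N(v)$ is its open neighborhood, and for $f:V\to\mathbb{R}$ and $B\subseteq V$ write $f(B)=\sum_{v\in B}f(v)$; $f(V)$ is the weight of $f$. An inverse signed total dominating function (ISTDF) of $G$ is a function $f:V\to\{-1,1\}$ such that $f(N(v))\le 0$ for every $v\in V$. The inverse signed total domination number $\gamma^{0}_{st}(G)$ is the maximum weight of an ISTDF of $G$. A leaf of a tree is a vertex of degree $1$; a support vertex is a vertex adjacent to at least one leaf. *)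

theory Defs
  imports Main
begin

definition simple_graph :: "'a set \<Rightarrow> ('a \<Rightarrow> 'a \<Rightarrow> bool) \<Rightarrow> bool" where
  "simple_graph V E \<longleftrightarrow> finite V \<and> (\<forall>u v. E u v \<longrightarrow> u \<in> V \<and> v \<in> V)
     \<and> (\<forall>u v. E u v \<longrightarrow> E v u) \<and> (\<forall>v. \<not> E v v)"

definition edges :: "'a set \<Rightarrow> ('a \<Rightarrow> 'a \<Rightarrow> bool) \<Rightarrow> 'a set set" where
  "edges V E = {{u, v} | u v. u \<in> V \<and> v \<in> V \<and> E u v}"

definition connected_graph :: "'a set \<Rightarrow> ('a \<Rightarrow> 'a \<Rightarrow> bool) \<Rightarrow> bool" where
  "connected_graph V E \<longleftrightarrow> (\<forall>u\<in>V. \<forall>v\<in>V. (\<lambda>x y. E x y)\<^sup>*\<^sup>* u v)"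

definition is_tree :: "'a set \<Rightarrow> ('a \<Rightarrow> 'a \<Rightarrow> bool) \<Rightarrow> bool" where
  "is_tree V E \<longleftrightarrow> simple_graph V E \<and> V \<noteq> {} \<and> connected_graph V E
     \<and> card (edges V E) = card V - 1"

definition nbhd :: "'a set \<Rightarrow> ('a \<Rightarrow> 'a \<Rightarrow> bool) \<Rightarrow> 'a \<Rightarrow> 'a set" where
  "nbhd V E v = {u \<in> V. E v u}"

definition is_leaf :: "'a set \<Rightarrow> ('a \<Rightarrow> 'a \<Rightarrow> bool) \<Rightarrow> 'a \<Rightarrow> bool" where
  "is_leaf V E v \<longleftrightarrow> v \<in> V \<and> card (nbhd V E v) = 1"

definition leaves_at :: "'a set \<Rightarrow> ('a \<Rightarrow> 'a \<Rightarrow> bool) \<Rightarrow> 'a \<Rightarrow> 'a set" where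
  "leaves_at V E v = {u \<in> nbhd V E v. is_leaf V E u}"

definition is_support :: "'a set \<Rightarrow> ('a \<Rightarrow> 'a \<Rightarrow> bool) \<Rightarrow> 'a \<Rightarrow> bool" where
  "is_support V E v \<longleftrightarrow> v \<in> V \<and> leaves_at V E v \<noteq> {}"

definition is_istdf :: "'a set \<Rightarrow> ('a \<Rightarrow> 'a \<Rightarrow> bool) \<Rightarrow> ('a \<Rightarrow> int) \<Rightarrow> bool" where
  "is_istdf V E f \<longleftrightarrow> (\<forall>v\<in>V. f v = -1 \<or> f v = 1)
     \<and> (\<forall>v\<in>V. (\<Sum>u\<in>nbhd V E v. f u) \<le> 0)"

definition weight :: "'a set \<Rightarrow> ('a \<Rightarrow> int) \<Rightarrow> int" where
  "weight V f = (\<Sum>v\<in>V. f v)"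

definition istd_number :: "'a set \<Rightarrow> ('a \<Rightarrow> 'a \<Rightarrow> bool) \<Rightarrow> int" where
  "istd_number V E = Max {weight V f | f. is_istdf V E f}"

end

theory Submission
  imports Defs
begin

text \<open>Among the maximum-weight ISTDFs choose one with the largest number of leaves labelled 1.
  Suppose that at some support vertex v fewer than half of the leaves get 1, so at least two
  more leaves get -1 than 1. If some non-leaf neighbour of v gets 1, exchanging its value with
  that of a negative leaf keeps the weight and every neighbourhood sum at v, but gains a
  positive leaf. Otherwise the neighbourhood sum at v is at most -2, and raising a negative leaf
  to 1 yields an ISTDF of larger weight. The only neighbourhood containing a leaf is that of its
  support vertex, so no other constraint is affected.\<close>

definition positive_leaves :: "'a set \<Rightarrow> ('a \<Rightarrow> 'a \<Rightarrow> bool) \<Rightarrow> ('a \<Rightarrow> int) \<Rightarrow> 'a set" where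
  "positive_leaves V E f = {u \<in> V. is_leaf V E u \<and> f u = 1}"

lemma sum_fun_upd:
  fixes f :: "'a \<Rightarrow> 'b::ab_group_add"
  assumes "finite S"
  shows "sum (f(u := a)) S = sum f S + (if u \<in> S then a - f u else 0)"
proof (cases "u \<in> S")
  case True
  have "sum (f(u := a)) (S - {u}) = sum f (S - {u})"
    by (rule sum.cong) auto
  then show ?thesis
    using True assms by (simp add: sum.remove)
next
  case False
  then have "sum (f(u := a)) S = sum f S"
    by (intro sum.cong) auto
  with False show ?thesis
    by simp
qed

lemma finite_nbhd: "simple_graph V E \<Longrightarrow> finite (nbhd V E x)"
  unfolding simple_graph_def nbhd_def by simp

lemma nbhd_subset: "nbhd V E x \<subseteq> V"
  unfolding nbhd_def by blast

lemma leaves_at_subset_nbhd: "leaves_at V E v \<subseteq> nbhd V E v"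
  unfolding leaves_at_def by blast

lemma nbhd_containing_leaf:
  assumes G: "simple_graph V E" and u: "u \<in> leaves_at V E v" and ux: "u \<in> nbhd V E x"
  shows "x = v"
proof -
  have sym: "E a b \<Longrightarrow> E b a" and inV: "E a b \<Longrightarrow> a \<in> V" for a b
    using G unfolding simple_graph_def by blast+
  have "E v u" "card (nbhd V E u) = 1"
    using u unfolding leaves_at_def nbhd_def is_leaf_def by auto
  moreover have "E x u"
    using ux unfolding nbhd_def by blast
  ultimately have "v \<in> nbhd V E u" "x \<in> nbhd V E u" "card (nbhd V E u) = 1"
    using sym inV unfolding nbhd_def by auto
  then show ?thesis
    by (metis card_1_singletonE singletonD)
qed

lemma finite_istdf_weights:
  assumes "finite V"
  shows "finite {weight V f | f. is_istdf V E f}"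
proof -
  have "\<bar>weight V f\<bar> \<le> int (card V)" if "is_istdf V E f" for f
  proof -
    have "\<bar>weight V f\<bar> \<le> (\<Sum>v\<in>V. \<bar>f v\<bar>)"
      unfolding weight_def by (rule sum_abs)
    also have "\<dots> = (\<Sum>v\<in>V. 1)"
      using that unfolding is_istdf_def by (intro sum.cong) auto
    finally show ?thesis by simp
  qed
  then have "{weight V f | f. is_istdf V E f} \<subseteq> {- int (card V) .. int (card V)}"
    by fastforce
  then show ?thesis
    by (rule finite_subset) simp
qed

lemma weight_le_istd_number:
  "finite V \<Longrightarrow> is_istdf V E f \<Longrightarrow> weight V f \<le> istd_number V E"
  unfolding istd_number_def by (intro Max_ge finite_istdf_weights) auto

lemma istd_number_attained:
  assumes "finite V"
  obtains f where "is_istdf V E f" and "weight V f = istd_number V E"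
proof -
  have "is_istdf V E (\<lambda>_. -1)"
    unfolding is_istdf_def by simp
  then have "istd_number V E \<in> {weight V f | f. is_istdf V E f}"
    unfolding istd_number_def using finite_istdf_weights[OF assms] by (intro Max_in) auto
  then show ?thesis
    using that by auto
qed

lemma istdf_raise_leaf:
  assumes G: "simple_graph V E" and f: "is_istdf V E f"
    and u: "u \<in> leaves_at V E v" and slack: "sum f (nbhd V E v) \<le> -2" and fu: "f u = -1"
  shows "is_istdf V E (f(u := 1))"
  unfolding is_istdf_def
proof (intro conjI ballI)
  fix x assume x: "x \<in> V"
  show "(f(u := 1)) x = -1 \<or> (f(u := 1)) x = 1"
    using f x unfolding is_istdf_def by simp
  have "sum f (nbhd V E x) \<le> 0"
    using f x unfolding is_istdf_def by blast
  moreover have "u \<in> nbhd V E x \<Longrightarrow> x = v"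
    by (rule nbhd_containing_leaf[OF G u])
  ultimately show "sum (f(u := 1)) (nbhd V E x) \<le> 0"
    using slack fu by (simp only: sum_fun_upd[OF finite_nbhd[OF G]]) auto
qed

lemma istdf_swap_leaf:
  assumes G: "simple_graph V E" and f: "is_istdf V E f"
    and u: "u \<in> leaves_at V E v" and w: "w \<in> nbhd V E v" and fu: "f u = -1" and fw: "f w = 1"
  shows "is_istdf V E (f(u := 1, w := -1))"
  unfolding is_istdf_def
proof (intro conjI ballI)
  fix x assume x: "x \<in> V"
  show "(f(u := 1, w := -1)) x = -1 \<or> (f(u := 1, w := -1)) x = 1"
    using f x unfolding is_istdf_def by simp
  have "u \<noteq> w"
    using fu fw by auto
  moreover have "sum f (nbhd V E x) \<le> 0"
    using f x unfolding is_istdf_def by blast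
  moreover have "u \<in> nbhd V E x \<Longrightarrow> x = v"
    by (rule nbhd_containing_leaf[OF G u])
  ultimately show "sum (f(u := 1, w := -1)) (nbhd V E x) \<le> 0"
    using w fu fw by (simp only: sum_fun_upd[OF finite_nbhd[OF G]]) auto
qed

lemma leaves_at_sign_split:
  assumes "is_istdf V E f"
  shows "leaves_at V E v = {u \<in> leaves_at V E v. f u = 1} \<union> {u \<in> leaves_at V E v. f u = -1}"
proof -
  have "leaves_at V E v \<subseteq> V"
    using leaves_at_subset_nbhd nbhd_subset by (rule subset_trans)
  then have "u \<in> leaves_at V E v \<Longrightarrow> f u = -1 \<or> f u = 1" for u
    using assms unfolding is_istdf_def by blast
  then show ?thesis
    by blast
qed

lemma card_leaves_at_split:
  assumes G: "simple_graph V E" and f: "is_istdf V E f"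
  shows "card (leaves_at V E v) =
    card {u \<in> leaves_at V E v. f u = 1} + card {u \<in> leaves_at V E v. f u = -1}"
proof -
  have "finite (leaves_at V E v)"
    using finite_subset[OF leaves_at_subset_nbhd finite_nbhd[OF G]] .
  then show ?thesis
    by (subst leaves_at_sign_split[OF f]) (rule card_Un_disjoint, auto)
qed

lemma nbhd_sum_le_leaf_balance:
  assumes G: "simple_graph V E" and f: "is_istdf V E f"
    and nonleaves: "\<forall>w \<in> nbhd V E v - leaves_at V E v. f w \<noteq> 1"
  shows "sum f (nbhd V E v) \<le>
    int (card {u \<in> leaves_at V E v. f u = 1}) - int (card {u \<in> leaves_at V E v. f u = -1})"
proof -
  let ?A = "leaves_at V E v"
  have fin: "finite ?A"
    using finite_subset[OF leaves_at_subset_nbhd finite_nbhd[OF G]] .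
  have "sum f ?A = sum f {u \<in> ?A. f u = 1} + sum f {u \<in> ?A. f u = -1}"
    using fin by (subst leaves_at_sign_split[OF f]) (rule sum.union_disjoint, auto)
  also have "\<dots> = int (card {u \<in> ?A. f u = 1}) - int (card {u \<in> ?A. f u = -1})"
    by simp
  finally have leaves: "sum f ?A = \<dots>" .
  have "x \<in> nbhd V E v \<Longrightarrow> f x = -1 \<or> f x = 1" for x
    using f nbhd_subset[of V E v] unfolding is_istdf_def by blast
  then have "sum f (nbhd V E v - ?A) \<le> 0"
    using nonleaves by (intro sum_nonpos) fastforce
  moreover have "sum f (nbhd V E v) = sum f (nbhd V E v - ?A) + sum f ?A"
    by (rule sum.subset_diff[OF leaves_at_subset_nbhd finite_nbhd[OF G]])
  ultimately show ?thesis
    using leaves by linarith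
qed

lemma few_positive_leaves_improvable:
  assumes G: "simple_graph V E" and f: "is_istdf V E f"
    and few: "card {u \<in> leaves_at V E v. f u = 1} < card (leaves_at V E v) div 2"
  obtains (heavier) g where "is_istdf V E g" and "weight V f < weight V g"
  | (more_positive) g where "is_istdf V E g" and "weight V g = weight V f"
      and "card (positive_leaves V E f) < card (positive_leaves V E g)"
proof -
  let ?A = "leaves_at V E v"
  have finV: "finite V"
    using G unfolding simple_graph_def by blast
  have gap: "card {u \<in> ?A. f u = -1} \<ge> card {u \<in> ?A. f u = 1} + 2"
    using few card_leaves_at_split[OF G f, of v] by linarith
  then have "{u \<in> ?A. f u = -1} \<noteq> {}"
    by (metis card.empty le_zero_eq add_2_eq_Suc' Suc_neq_Zero)
  then obtain u where u: "u \<in> ?A" and fu: "f u = -1"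
    by blast
  have uV: "u \<in> V"
    using subsetD[OF nbhd_subset subsetD[OF leaves_at_subset_nbhd u]] .
  show thesis
  proof (cases "\<exists>w \<in> nbhd V E v - ?A. f w = 1")
    case True
    then obtain w where w: "w \<in> nbhd V E v" "w \<notin> ?A" and fw: "f w = 1"
      by blast
    let ?g = "f(u := 1, w := -1)"
    have "u \<noteq> w"
      using fu fw by auto
    moreover have "w \<in> V"
      using subsetD[OF nbhd_subset w(1)] .
    ultimately have "weight V ?g = weight V f"
      using uV fu fw unfolding weight_def sum_fun_upd[OF finV] by simp
    moreover have "positive_leaves V E ?g = insert u (positive_leaves V E f)"
      using w \<open>u \<noteq> w\<close> u uV unfolding positive_leaves_def leaves_at_def by auto
    moreover have "u \<notin> positive_leaves V E f" and "finite (positive_leaves V E f)"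
      using fu finV unfolding positive_leaves_def by auto
    ultimately show thesis
      using more_positive istdf_swap_leaf[OF G f u w(1) fu fw] by simp
  next
    case False
    then have "sum f (nbhd V E v) \<le> -2"
      using nbhd_sum_le_leaf_balance[OF G f, of v] gap by auto
    then have "is_istdf V E (f(u := 1))"
      using istdf_raise_leaf[OF G f u _ fu] by blast
    moreover have "weight V (f(u := 1)) = weight V f + 2"
      using uV fu unfolding weight_def sum_fun_upd[OF finV] by simp
    ultimately show thesis
      using heavier by simp
  qed
qed

lemma optimal_istdf_with_half_positive_leaves:
  assumes G: "simple_graph V E"
  obtains f where "is_istdf V E f" and "weight V f = istd_number V E"
    and "\<And>v. card {u \<in> leaves_at V E v. f u = 1} \<ge> card (leaves_at V E v) div 2"
proof -
  let ?optimal = "\<lambda>f. is_istdf V E f \<and> weight V f = istd_number V E"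
  have finV: "finite V"
    using G unfolding simple_graph_def by blast
  obtain f0 where "?optimal f0"
    using istd_number_attained[OF finV] by blast
  moreover have "card (positive_leaves V E f) < Suc (card V)" for f
    using card_mono[OF finV] unfolding positive_leaves_def by (simp add: le_imp_less_Suc)
  ultimately obtain f where opt: "?optimal f"
    and most: "\<And>g. ?optimal g \<Longrightarrow> card (positive_leaves V E g) \<le> card (positive_leaves V E f)"
    using ex_has_greatest_nat[of ?optimal f0 "\<lambda>f. card (positive_leaves V E f)"] by blast
  have "card {u \<in> leaves_at V E v. f u = 1} \<ge> card (leaves_at V E v) div 2" for v
  proof (rule ccontr)
    assume "\<not> ?thesis"
    then have few: "card {u \<in> leaves_at V E v. f u = 1} < card (leaves_at V E v) div 2"
      by simp
    from opt have "is_istdf V E f" ..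
    then show False
    proof (rule few_positive_leaves_improvable[OF G _ few])
      fix g assume "is_istdf V E g" and "weight V f < weight V g"
      then show False
        using opt weight_le_istd_number[OF finV, of E g] by simp
    next
      fix g assume "is_istdf V E g" and "weight V g = weight V f"
        and "card (positive_leaves V E f) < card (positive_leaves V E g)"
      then show False
        using opt most[of g] by simp
    qed
  qed
  then show thesis
    using that opt by blast
qed

theorem lemma4p2:
  fixes V :: "'a set" and E :: "'a \<Rightarrow> 'a \<Rightarrow> bool"
  assumes "is_tree V E" and "card V \<ge> 2"
  shows "\<exists>f. is_istdf V E f \<and> weight V f = istd_number V E
           \<and> (\<forall>v. is_support V E v \<longrightarrow>
                 card {u \<in> leaves_at V E v. f u = 1} \<ge> card (leaves_at V E v) div 2)"
proof -
  have "simple_graph V E"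
    using assms(1) unfolding is_tree_def by blast
  then show ?thesis
    by (metis optimal_istdf_with_half_positive_leaves)
qed

end
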